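(* Let $v$ be a quadratic Hamiltonian vector field on $\mathbb{C}^2$ with four distinct non-degenerate singular points $p_1,\dots,p_4$. Assume its spectrum is not exceptional, i.e. $\det Dv(p_j)+\det Dv(p_k)\neq0$ for all $j\ne k$. Then $v$ has exactly one twin vector field among all quadratic vector fields, and this twin is $-v$.
   Context: A quadratic vector field is $v=P\,\partial_x+Q\,\partial_y$ with $\deg P,\deg Q\le2$, and it is Hamiltonian if $P_x+Q_y\equiv0$. $Dv$ is the Jacobian matrix of $(P,Q)$. A singular point $p$ is non-degenerate if $\det Dv(p)\ne0$. Two vector fields $v_1,v_2$ with isolated singularities are twin vector fields if $v_1\ne v_2$, they have the same singular set, and at each common singular point $p$ the matrices $Dv_1(p)$ and $Dv_2(p)$ have the same trace and the same determinant. *)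

theory Defs
  imports "HOL-Analysis.Analysis"
begin

type_synonym vf = "complex \<times> complex \<Rightarrow> complex \<times> complex"

definition quad_poly :: "(complex \<times> complex \<Rightarrow> complex) \<Rightarrow> bool" where
  "quad_poly f \<longleftrightarrow> (\<exists>a b c d e g. \<forall>x y.
      f (x, y) = a + b * x + c * y + d * x\<^sup>2 + e * x * y + g * y\<^sup>2)"

definition quadratic_vf :: "vf \<Rightarrow> bool" where
  "quadratic_vf v \<longleftrightarrow> quad_poly (\<lambda>z. fst (v z)) \<and> quad_poly (\<lambda>z. snd (v z))"

definition d_x :: "(complex \<times> complex \<Rightarrow> complex) \<Rightarrow> complex \<times> complex \<Rightarrow> complex" where
  "d_x f p = deriv (\<lambda>x. f (x, snd p)) (fst p)"

definition d_y :: "(complex \<times> complex \<Rightarrow> complex) \<Rightarrow> complex \<times> complex \<Rightarrow> complex" where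
  "d_y f p = deriv (\<lambda>y. f (fst p, y)) (snd p)"

definition vP :: "vf \<Rightarrow> complex \<times> complex \<Rightarrow> complex" where
  "vP v = (\<lambda>z. fst (v z))"

definition vQ :: "vf \<Rightarrow> complex \<times> complex \<Rightarrow> complex" where
  "vQ v = (\<lambda>z. snd (v z))"

definition hamiltonian :: "vf \<Rightarrow> bool" where
  "hamiltonian v \<longleftrightarrow> (\<forall>p. d_x (vP v) p + d_y (vQ v) p = 0)"

definition tr_D :: "vf \<Rightarrow> complex \<times> complex \<Rightarrow> complex" where
  "tr_D v p = d_x (vP v) p + d_y (vQ v) p"

definition det_D :: "vf \<Rightarrow> complex \<times> complex \<Rightarrow> complex" where
  "det_D v p = d_x (vP v) p * d_y (vQ v) p - d_y (vP v) p * d_x (vQ v) p"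

definition sing :: "vf \<Rightarrow> (complex \<times> complex) set" where
  "sing v = {p. v p = (0, 0)}"

definition isolated_sing :: "vf \<Rightarrow> bool" where
  "isolated_sing v \<longleftrightarrow> (\<forall>p \<in> sing v. \<not> p islimpt sing v)"

definition twins :: "vf \<Rightarrow> vf \<Rightarrow> bool" where
  "twins v1 v2 \<longleftrightarrow> isolated_sing v1 \<and> isolated_sing v2 \<and> v1 \<noteq> v2 \<and>
     sing v1 = sing v2 \<and>
     (\<forall>p \<in> sing v1. tr_D v1 p = tr_D v2 p \<and> det_D v1 p = det_D v2 p)"

end

theory Submission
  imports Defs
begin

text \<open>
  The Jacobian of a Hamiltonian field is traceless, so Dv and -Dv have the same trace and
  determinant everywhere and -v is a twin. Conversely, a quadratic twin w vanishes at the
  four singular points, and no three of them are collinear (a quadratic field vanishing at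
  three points of a line vanishes on the whole line). The quadratics vanishing at four such
  points form the span of the components P, Q of v, so w = M v for a constant matrix M and
  Dw(p) = M Dv(p) at the singular points. Since the trapezoid rule is exact for quadratics,
  Dv(p_j) + Dv(p_k) annihilates p_k - p_j, i.e. det (Dv(p_j) + Dv(p_k)) = 0; together with
  det Dv(p_j) + det Dv(p_k) \<noteq> 0 this makes Dv(p_1), Dv(p_2), Dv(p_3) a basis of the traceless
  matrices. The trace conditions tr (M Dv(p_j)) = 0 then force M = c I, the determinant
  condition gives c^2 = 1, and w \<noteq> v leaves c = -1.
\<close>

section \<open>Quadratic polynomials in two variables\<close>

definition qpoly :: "complex \<Rightarrow> complex \<Rightarrow> complex \<Rightarrow> complex \<Rightarrow> complex \<Rightarrow> complex
    \<Rightarrow> complex \<times> complex \<Rightarrow> complex" where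
  "qpoly a b c d e g = (\<lambda>(x, y). a + b * x + c * y + d * x\<^sup>2 + e * x * y + g * y\<^sup>2)"

lemma qpoly_apply [simp]: "qpoly a b c d e g (x, y) = a + b * x + c * y + d * x\<^sup>2 + e * x * y + g * y\<^sup>2"
  by (simp add: qpoly_def)

lemma quad_poly_iff_qpoly: "quad_poly f \<longleftrightarrow> (\<exists>a b c d e g. f = qpoly a b c d e g)"
  unfolding quad_poly_def fun_eq_iff by auto

lemma d_x_qpoly: "d_x (qpoly a b c d e g) (x, y) = b + 2 * d * x + e * y"
proof -
  have "((\<lambda>x. qpoly a b c d e g (x, y)) has_field_derivative b + 2 * d * x + e * y) (at x)"
    by (auto intro!: derivative_eq_intros simp: algebra_simps)
  then show ?thesis by (simp add: d_x_def DERIV_imp_deriv)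
qed

lemma d_y_qpoly: "d_y (qpoly a b c d e g) (x, y) = c + e * x + 2 * g * y"
proof -
  have "((\<lambda>y. qpoly a b c d e g (x, y)) has_field_derivative c + e * x + 2 * g * y) (at y)"
    by (auto intro!: derivative_eq_intros simp: algebra_simps)
  then show ?thesis by (simp add: d_y_def DERIV_imp_deriv)
qed

lemma lincomb_qpoly:
  "(\<lambda>z. \<alpha> * qpoly a b c d e g z + \<beta> * qpoly a' b' c' d' e' g' z) =
    qpoly (\<alpha> * a + \<beta> * a') (\<alpha> * b + \<beta> * b') (\<alpha> * c + \<beta> * c') (\<alpha> * d + \<beta> * d')
      (\<alpha> * e + \<beta> * e') (\<alpha> * g + \<beta> * g')"
  by (simp add: fun_eq_iff qpoly_def split_beta algebra_simps)

lemma quad_poly_lincomb: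
  assumes "quad_poly f" "quad_poly g"
  shows "quad_poly (\<lambda>z. \<alpha> * f z + \<beta> * g z)"
proof -
  obtain a b c d e k a' b' c' d' e' k' where "f = qpoly a b c d e k" "g = qpoly a' b' c' d' e' k'"
    using assms unfolding quad_poly_iff_qpoly by blast
  then show ?thesis
    unfolding quad_poly_iff_qpoly by (simp only: lincomb_qpoly) blast
qed

lemma
  assumes "quad_poly f" "quad_poly g"
  shows d_x_lincomb: "d_x (\<lambda>z. \<alpha> * f z + \<beta> * g z) p = \<alpha> * d_x f p + \<beta> * d_x g p"
    and d_y_lincomb: "d_y (\<lambda>z. \<alpha> * f z + \<beta> * g z) p = \<alpha> * d_y f p + \<beta> * d_y g p"
proof -
  obtain a b c d e k a' b' c' d' e' k' where "f = qpoly a b c d e k" "g = qpoly a' b' c' d' e' k'"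
    using assms unfolding quad_poly_iff_qpoly by blast
  moreover obtain x y where "p = (x, y)" by fastforce
  ultimately show "d_x (\<lambda>z. \<alpha> * f z + \<beta> * g z) p = \<alpha> * d_x f p + \<beta> * d_x g p"
    and "d_y (\<lambda>z. \<alpha> * f z + \<beta> * g z) p = \<alpha> * d_y f p + \<beta> * d_y g p"
    by (simp_all add: lincomb_qpoly d_x_qpoly d_y_qpoly algebra_simps)
qed

lemma quad_poly_trapezoid_rule:
  assumes "quad_poly f"
  shows "2 * (f q - f p) = (d_x f p + d_x f q) * (fst q - fst p) + (d_y f p + d_y f q) * (snd q - snd p)"
proof -
  obtain a b c d e g where "f = qpoly a b c d e g"
    using assms quad_poly_iff_qpoly by blast
  moreover obtain x y x' y' where "p = (x, y)" "q = (x', y')"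
    by fastforce
  ultimately show ?thesis
    by (simp add: d_x_qpoly d_y_qpoly power2_eq_square algebra_simps)
qed

section \<open>Linear algebra and affine geometry of the plane\<close>

text \<open>Complex scalar multiplication on \<open>complex \<times> complex\<close>, which as a product type only
  carries the real scaling \<open>scaleR\<close>.\<close>

definition scale2 :: "complex \<Rightarrow> complex \<times> complex \<Rightarrow> complex \<times> complex" where
  "scale2 t z = (t * fst z, t * snd z)"

definition cross :: "complex \<times> complex \<Rightarrow> complex \<times> complex \<Rightarrow> complex" where
  "cross u w = fst u * snd w - snd u * fst w"

lemma scale2_0 [simp]: "scale2 0 z = 0" "scale2 t 0 = 0"
  and scale2_1 [simp]: "scale2 1 z = z"
  by (simp_all add: scale2_def zero_prod_def)

lemma midpoint_eq_scale2: "midpoint p q = p + scale2 (1/2) (q - p)"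
  by (simp add: midpoint_def scale2_def prod_eq_iff scaleR_conv_of_real field_simps)

lemma affine_coordinates:
  assumes "cross X Y \<noteq> 0"
  shows "z = p + scale2 (cross (z - p) Y / cross X Y) X + scale2 (cross X (z - p) / cross X Y) Y"
proof -
  have "z - p = scale2 (cross (z - p) Y / cross X Y) X + scale2 (cross X (z - p) / cross X Y) Y"
    using assms unfolding prod_eq_iff scale2_def cross_def
    by (simp add: divide_simps) algebra
  then show ?thesis
    by (simp add: algebra_simps)
qed

lemma cross_eq_0_imp_on_line:
  assumes "q \<noteq> p" "cross (q - p) (r - p) = 0"
  obtains \<tau> where "r = p + scale2 \<tau> (q - p)"
proof (cases "fst q = fst p")
  case True
  with assms have "snd q \<noteq> snd p" "fst r = fst p"
    by (auto simp: prod_eq_iff cross_def)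
  then show thesis
    using True by (intro that[of "(snd r - snd p) / (snd q - snd p)"]) (simp add: prod_eq_iff scale2_def)
next
  case False
  with assms(2) have "snd r = snd p + (fst r - fst p) / (fst q - fst p) * (snd q - snd p)"
    by (simp add: cross_def field_simps)
  then show thesis
    using False by (intro that[of "(fst r - fst p) / (fst q - fst p)"]) (simp add: prod_eq_iff scale2_def)
qed

lemma singular_if_nonzero_kernel:
  fixes a b c d x y :: complex
  assumes "a * x + b * y = 0" "c * x + d * y = 0" "(x, y) \<noteq> (0, 0)"
  shows "a * d - b * c = 0"
proof -
  have "(a * d - b * c) * x = d * (a * x + b * y) - b * (c * x + d * y)"
    "(a * d - b * c) * y = a * (c * x + d * y) - c * (a * x + b * y)"
    by (simp_all add: algebra_simps)
  then show ?thesis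
    using assms by auto
qed

lemma cross_eq_0_imp_annihilator:
  assumes "cross u w = 0"
  obtains \<alpha> \<beta> where "(\<alpha>, \<beta>) \<noteq> (0, 0)" "\<alpha> * fst u + \<beta> * snd u = 0" "\<alpha> * fst w + \<beta> * snd w = 0"
proof (cases "u = 0")
  case True
  show thesis
  proof (cases "w = 0")
    case True
    then show thesis
      using \<open>u = 0\<close> by (intro that[of 1 0]) auto
  next
    case False
    then show thesis
      using \<open>u = 0\<close> by (intro that[of "snd w" "- fst w"]) (auto simp: prod_eq_iff algebra_simps)
  qed
next
  case False
  then show thesis
    using assms by (intro that[of "snd u" "- fst u"]) (auto simp: prod_eq_iff cross_def algebra_simps)
qed

lemma cross_neq_0_imp_solvable:
  assumes "cross u w \<noteq> 0"
  obtains \<alpha> \<beta> where "\<alpha> * fst u + \<beta> * snd u = r" "\<alpha> * fst w + \<beta> * snd w = s"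
proof (rule that)
  show "(r * snd w - s * snd u) / cross u w * fst u + (s * fst u - r * fst w) / cross u w * snd u = r"
    "(r * snd w - s * snd u) / cross u w * fst w + (s * fst u - r * fst w) / cross u w * snd w = s"
    using assms by (simp_all add: cross_def divide_simps) (simp_all add: algebra_simps)
qed

lemma traceless_triple_independent:
  fixes a1 b1 c1 a2 b2 c2 a3 b3 c3 :: complex
  assumes "(a1 + a2)\<^sup>2 + (b1 + b2) * (c1 + c2) = 0" "(a1 + a3)\<^sup>2 + (b1 + b3) * (c1 + c3) = 0"
    "(a2 + a3)\<^sup>2 + (b2 + b3) * (c2 + c3) = 0"
    and "(a1\<^sup>2 + b1 * c1 + (a2\<^sup>2 + b2 * c2)) * (a1\<^sup>2 + b1 * c1 + (a3\<^sup>2 + b3 * c3))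
      * (a2\<^sup>2 + b2 * c2 + (a3\<^sup>2 + b3 * c3)) \<noteq> 0"
  shows "a1 * (b2 * c3 - b3 * c2) - b1 * (a2 * c3 - a3 * c2) + c1 * (a2 * b3 - a3 * b2) \<noteq> 0"
proof -
  define K where "K = a1 * (b2 * c3 - b3 * c2) - b1 * (a2 * c3 - a3 * c2) + c1 * (a2 * b3 - a3 * b2)"
  define e1 e2 e3 where "e1 = a1\<^sup>2 + b1 * c1" and "e2 = a2\<^sup>2 + b2 * c2" and "e3 = a3\<^sup>2 + b3 * c3"
  define B12 B13 B23 where "B12 = 2 * a1 * a2 + b1 * c2 + c1 * b2"
    and "B13 = 2 * a1 * a3 + b1 * c3 + c1 * b3" and "B23 = 2 * a2 * a3 + b2 * c3 + c2 * b3"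
  \<comment> \<open>\<open>K\<close> is the determinant of the three matrices in the coordinates \<open>(a, b, c)\<close>, and
    \<open>2 K^2\<close> is minus the Gram determinant of the polarisation of \<open>a^2 + b c\<close>.\<close>
  have gram: "2 * K\<^sup>2 = - (2 * e1 * (4 * e2 * e3 - B23\<^sup>2) - B12 * (2 * B12 * e3 - B23 * B13)
      + B13 * (B12 * B23 - 2 * e2 * B13))"
    unfolding K_def e1_def e2_def e3_def B12_def B13_def B23_def
    by algebra
  have "(a1 + a2)\<^sup>2 + (b1 + b2) * (c1 + c2) = e1 + e2 + B12"
    "(a1 + a3)\<^sup>2 + (b1 + b3) * (c1 + c3) = e1 + e3 + B13"
    "(a2 + a3)\<^sup>2 + (b2 + b3) * (c2 + c3) = e2 + e3 + B23"
    unfolding e1_def e2_def e3_def B12_def B13_def B23_def by algebra+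
  then have "e1 + e2 + B12 = 0" "e1 + e3 + B13 = 0" "e2 + e3 + B23 = 0"
    using assms(1-3) by simp_all
  with gram have "K\<^sup>2 = 2 * ((e1 + e2) * (e1 + e3) * (e2 + e3))"
    by algebra
  then show ?thesis
    using assms(4) unfolding K_def e1_def e2_def e3_def by auto
qed

lemma trace_annihilator_of_traceless_basis:
  fixes a1 b1 c1 a2 b2 c2 a3 b3 c3 m11 m12 m21 m22 :: complex
  assumes "a1 * (b2 * c3 - b3 * c2) - b1 * (a2 * c3 - a3 * c2) + c1 * (a2 * b3 - a3 * b2) \<noteq> 0"
    and "m11 * a1 + m12 * c1 + m21 * b1 - m22 * a1 = 0"
      "m11 * a2 + m12 * c2 + m21 * b2 - m22 * a2 = 0"
      "m11 * a3 + m12 * c3 + m21 * b3 - m22 * a3 = 0"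
  shows "m12 = 0 \<and> m21 = 0 \<and> m22 = m11"
proof -
  define K where "K = a1 * (b2 * c3 - b3 * c2) - b1 * (a2 * c3 - a3 * c2) + c1 * (a2 * b3 - a3 * b2)"
  have "K * m12 = 0" "K * m21 = 0" "K * (m22 - m11) = 0"
    using assms(2-4) unfolding K_def by algebra+
  then show ?thesis
    using assms(1) unfolding K_def by simp
qed

section \<open>Zeros of quadratic polynomials\<close>

lemma quad_poly_affine_substitution:
  assumes "quad_poly f"
  shows "quad_poly (\<lambda>z. f (p + scale2 (fst z) X + scale2 (snd z) Y))"
proof -
  obtain a b c d e g where f: "f = qpoly a b c d e g"
    using assms quad_poly_iff_qpoly by blast
  obtain x0 y0 X1 Y1 X2 Y2 where "p = (x0, y0)" "X = (X1, Y1)" "Y = (X2, Y2)"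
    by (metis prod.collapse)
  then have "(\<lambda>z. f (p + scale2 (fst z) X + scale2 (snd z) Y)) =
    qpoly (f p) (b*X1 + c*Y1 + 2*d*x0*X1 + e*(x0*Y1 + y0*X1) + 2*g*y0*Y1)
      (b*X2 + c*Y2 + 2*d*x0*X2 + e*(x0*Y2 + y0*X2) + 2*g*y0*Y2)
      (d*X1\<^sup>2 + e*X1*Y1 + g*Y1\<^sup>2) (2*d*X1*X2 + e*(X1*Y2 + X2*Y1) + 2*g*Y1*Y2)
      (d*X2\<^sup>2 + e*X2*Y2 + g*Y2\<^sup>2)"
    unfolding f by (simp add: fun_eq_iff qpoly_def split_beta scale2_def power2_eq_square algebra_simps)
  then show ?thesis
    unfolding quad_poly_iff_qpoly by blast
qed

lemma quad_poly_on_line: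
  assumes "quad_poly f"
  obtains a b c where "\<And>t. f (p + scale2 t X) = a + b * t + c * t\<^sup>2"
proof -
  obtain a b c d e g where "(\<lambda>z. f (p + scale2 (fst z) X + scale2 (snd z) 0)) = qpoly a b c d e g"
    using quad_poly_affine_substitution[OF assms] quad_poly_iff_qpoly by blast
  from fun_cong[OF this, of "(t, 0)" for t] show thesis
    by (intro that[of a b d]) simp
qed

lemma quadratic_three_roots:
  fixes a b c s t u :: complex
  assumes "s \<noteq> t" "s \<noteq> u" "t \<noteq> u"
    and "a + b * s + c * s\<^sup>2 = 0" "a + b * t + c * t\<^sup>2 = 0" "a + b * u + c * u\<^sup>2 = 0"
  shows "a = 0 \<and> b = 0 \<and> c = 0"
proof -
  have "(s - t) * (b + c * (s + t)) = (a + b * s + c * s\<^sup>2) - (a + b * t + c * t\<^sup>2)"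
    "(s - u) * (b + c * (s + u)) = (a + b * s + c * s\<^sup>2) - (a + b * u + c * u\<^sup>2)"
    by (simp_all add: power2_eq_square algebra_simps)
  then have "(s - t) * (b + c * (s + t)) = 0" "(s - u) * (b + c * (s + u)) = 0"
    using assms(4-6) by simp_all
  then have "b + c * (s + t) = 0" "b + c * (s + u) = 0"
    using assms(1,2) by simp_all
  have "c * (t - u) = (b + c * (s + t)) - (b + c * (s + u))"
    by (simp add: algebra_simps)
  also have "\<dots> = 0"
    using \<open>b + c * (s + t) = 0\<close> \<open>b + c * (s + u) = 0\<close> by simp
  finally have "c * (t - u) = 0" .
  then have "c = 0"
    using assms(3) by simp
  then show ?thesis
    using \<open>b + c * (s + t) = 0\<close> assms(4) by simp
qed

lemma quad_poly_vanishing_on_line: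
  assumes "quad_poly f" and "s \<noteq> t" "s \<noteq> u" "t \<noteq> u"
    and "f (p + scale2 s X) = 0" "f (p + scale2 t X) = 0" "f (p + scale2 u X) = 0"
  shows "f (p + scale2 r X) = 0"
proof -
  obtain a b c where f: "\<And>t. f (p + scale2 t X) = a + b * t + c * t\<^sup>2"
    using quad_poly_on_line[OF assms(1), of p X] by blast
  have "a = 0 \<and> b = 0 \<and> c = 0"
    using quadratic_three_roots[OF assms(2-4)] assms(5-7) unfolding f .
  then show ?thesis
    unfolding f by simp
qed

lemma quad_poly_vanishing_at_six_points:
  assumes "quad_poly f"
    and "f p1 = 0" "f p2 = 0" "f p3 = 0" "f p4 = 0"
    and "f (midpoint p1 p2) = 0" "f (midpoint p1 p3) = 0"
    and "cross (p2 - p1) (p3 - p1) \<noteq> 0" "cross (p4 - p1) (p3 - p1) \<noteq> 0"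
      "cross (p2 - p1) (p4 - p1) \<noteq> 0"
  shows "f z = 0"
proof -
  \<comment> \<open>In the coordinates \<open>(u, w) \<mapsto> p1 + u X + w Y\<close> the polynomial vanishes on both axes,
    hence equals \<open>e u w\<close>, and \<open>p4\<close> lies on neither axis.\<close>
  define X Y where "X = p2 - p1" and "Y = p3 - p1"
  obtain a b c d e g where g: "\<And>u w. f (p1 + scale2 u X + scale2 w Y) = qpoly a b c d e g (u, w)"
  proof -
    obtain a b c d e g where "(\<lambda>z. f (p1 + scale2 (fst z) X + scale2 (snd z) Y)) = qpoly a b c d e g"
      using quad_poly_affine_substitution[OF assms(1)] quad_poly_iff_qpoly by blast
    from fun_cong[OF this, of "(u, w)" for u w] show thesis
      by (intro that[of a b c d e g]) simp
  qed
  have "a = 0 \<and> b = 0 \<and> d = 0"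
    using g[of 0 0] g[of 1 0] g[of "1/2" 0] assms(2,3,6)
    by (intro quadratic_three_roots[of 0 1 "1/2"]) (simp_all add: X_def midpoint_eq_scale2)
  moreover have "a = 0 \<and> c = 0 \<and> g = 0"
    using g[of 0 0] g[of 0 1] g[of 0 "1/2"] assms(2,4,7)
    by (intro quadratic_three_roots[of 0 1 "1/2"]) (simp_all add: Y_def midpoint_eq_scale2)
  ultimately have f: "f (p1 + scale2 u X + scale2 w Y) = e * u * w" for u w
    using g by simp
  have XY: "cross X Y \<noteq> 0"
    using assms(8) by (simp add: X_def Y_def)
  define s t where "s = cross (p4 - p1) Y / cross X Y" and "t = cross X (p4 - p1) / cross X Y"
  have "p4 = p1 + scale2 s X + scale2 t Y"
    unfolding s_def t_def by (rule affine_coordinates[OF XY])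
  then have "e * s * t = 0"
    using f assms(5) by metis
  moreover have "s \<noteq> 0" "t \<noteq> 0"
    using XY assms(9,10) by (simp_all add: s_def t_def X_def Y_def)
  ultimately have "e = 0"
    by simp
  have "z = p1 + scale2 (cross (z - p1) Y / cross X Y) X + scale2 (cross X (z - p1) / cross X Y) Y"
    by (rule affine_coordinates[OF XY])
  moreover have "f (p1 + scale2 u X + scale2 w Y) = 0" for u w
    using f \<open>e = 0\<close> by simp
  ultimately show ?thesis
    by metis
qed

section \<open>Quadratic vector fields with four singular points\<close>

lemma quadratic_vf_iff: "quadratic_vf v \<longleftrightarrow> quad_poly (vP v) \<and> quad_poly (vQ v)"
  by (simp add: quadratic_vf_def vP_def vQ_def)

lemma sing_iff: "z \<in> sing v \<longleftrightarrow> vP v z = 0 \<and> vQ v z = 0"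
  by (simp add: sing_def vP_def vQ_def prod_eq_iff)

lemma finite_sing_imp_isolated_sing: "finite (sing v) \<Longrightarrow> isolated_sing v"
  unfolding isolated_sing_def islimpt_eq_infinite_ball
  by (meson finite_Int zero_less_one)

lemma sing_no_three_collinear:
  assumes "quadratic_vf v" "finite (sing v)" "p \<in> sing v" "q \<in> sing v" "r \<in> sing v"
    and "p \<noteq> q" "p \<noteq> r" "q \<noteq> r"
  shows "cross (q - p) (r - p) \<noteq> 0"
proof
  assume "cross (q - p) (r - p) = 0"
  then obtain \<tau> where r: "r = p + scale2 \<tau> (q - p)"
    using cross_eq_0_imp_on_line assms(6) by metis
  have "\<tau> \<noteq> 0" "\<tau> \<noteq> 1"
    using r assms(7,8) by auto
  have "p + scale2 t (q - p) \<in> sing v" for t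
  proof -
    have on_line: "f (p + scale2 t (q - p)) = 0"
      if "quad_poly f" "f p = 0" "f q = 0" "f r = 0" for f
      using quad_poly_vanishing_on_line[OF that(1), of 0 1 \<tau> p "q - p" t] that(2-4)
        \<open>\<tau> \<noteq> 0\<close> \<open>\<tau> \<noteq> 1\<close> r by simp
    show ?thesis
      using assms(1,3-5) unfolding quadratic_vf_iff sing_iff by (blast intro: on_line)
  qed
  moreover have "inj (\<lambda>t. p + scale2 t (q - p))"
    using assms(6) by (auto simp: inj_def scale2_def prod_eq_iff)
  ultimately have "infinite (sing v)"
    by (metis finite_imageD image_subsetI infinite_UNIV_char_0 rev_finite_subset)
  then show False
    using assms(2) by simp
qed

lemma four_sing_in_general_position:
  assumes "quadratic_vf v" "sing v = {p1, p2, p3, p4}" "distinct [p1, p2, p3, p4]"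
  shows "cross (p2 - p1) (p3 - p1) \<noteq> 0" "cross (p4 - p1) (p3 - p1) \<noteq> 0"
    "cross (p2 - p1) (p4 - p1) \<noteq> 0"
proof -
  have "finite (sing v)"
    using assms(2) by simp
  note no_three = sing_no_three_collinear[OF assms(1) this]
  show "cross (p2 - p1) (p3 - p1) \<noteq> 0" "cross (p4 - p1) (p3 - p1) \<noteq> 0"
    "cross (p2 - p1) (p4 - p1) \<noteq> 0"
    using no_three[of p1 p2 p3] no_three[of p1 p4 p3] no_three[of p1 p2 p4] assms(2,3) by auto
qed

lemma sing_Jacobian_sum_singular:
  assumes "quadratic_vf v" "p \<in> sing v" "q \<in> sing v" "p \<noteq> q"
  shows "(d_x (vP v) p + d_x (vP v) q) * (d_y (vQ v) p + d_y (vQ v) q)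
       - (d_y (vP v) p + d_y (vP v) q) * (d_x (vQ v) p + d_x (vQ v) q) = 0"
proof (rule singular_if_nonzero_kernel)
  show "(d_x (vP v) p + d_x (vP v) q) * (fst q - fst p) + (d_y (vP v) p + d_y (vP v) q) * (snd q - snd p) = 0"
    "(d_x (vQ v) p + d_x (vQ v) q) * (fst q - fst p) + (d_y (vQ v) p + d_y (vQ v) q) * (snd q - snd p) = 0"
    using assms(1-3) quad_poly_trapezoid_rule[of "vP v" q p] quad_poly_trapezoid_rule[of "vQ v" q p]
    by (simp_all add: quadratic_vf_iff sing_iff)
  show "(fst q - fst p, snd q - snd p) \<noteq> (0, 0)"
    using assms(4) by (auto simp: prod_eq_iff)
qed

lemma sing_midpoint_values_independent:
  assumes "quadratic_vf v" "sing v = {p1, p2, p3, p4}" "distinct [p1, p2, p3, p4]"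
    and "det_D v p1 \<noteq> 0"
  shows "cross (v (midpoint p1 p2)) (v (midpoint p1 p3)) \<noteq> 0"
proof
  assume "cross (v (midpoint p1 p2)) (v (midpoint p1 p3)) = 0"
  then obtain \<alpha> \<beta> where "(\<alpha>, \<beta>) \<noteq> (0, 0)"
    and mid: "\<alpha> * fst (v (midpoint p1 p2)) + \<beta> * snd (v (midpoint p1 p2)) = 0"
      "\<alpha> * fst (v (midpoint p1 p3)) + \<beta> * snd (v (midpoint p1 p3)) = 0"
    by (rule cross_eq_0_imp_annihilator)
  define F where "F = (\<lambda>z. \<alpha> * vP v z + \<beta> * vQ v z)"
  have quad: "quad_poly (vP v)" "quad_poly (vQ v)"
    using assms(1) quadratic_vf_iff by auto
  have F_sing: "F p = 0" if "p \<in> sing v" for p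
    using that by (simp add: F_def sing_iff)
  have "F z = 0" for z
  proof (rule quad_poly_vanishing_at_six_points)
    show "quad_poly F"
      unfolding F_def by (rule quad_poly_lincomb[OF quad])
    show "F p1 = 0" "F p2 = 0" "F p3 = 0" "F p4 = 0"
      using F_sing assms(2) by simp_all
    show "F (midpoint p1 p2) = 0" "F (midpoint p1 p3) = 0"
      using mid by (simp_all add: F_def vP_def vQ_def)
  qed (fact four_sing_in_general_position[OF assms(1-3)])+
  then have "F = (\<lambda>_. 0)"
    by blast
  then have "d_x F p1 = 0" "d_y F p1 = 0"
    by (simp_all add: d_x_def d_y_def)
  then have "d_x (vP v) p1 * \<alpha> + d_x (vQ v) p1 * \<beta> = 0" "d_y (vP v) p1 * \<alpha> + d_y (vQ v) p1 * \<beta> = 0"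
    unfolding F_def d_x_lincomb[OF quad] d_y_lincomb[OF quad] by (simp_all add: mult.commute)
  then have "d_x (vP v) p1 * d_y (vQ v) p1 - d_x (vQ v) p1 * d_y (vP v) p1 = 0"
    using \<open>(\<alpha>, \<beta>) \<noteq> (0, 0)\<close> by (rule singular_if_nonzero_kernel)
  with assms(4) show False
    by (simp add: det_D_def mult.commute)
qed

lemma quad_poly_vanishing_on_sing_in_span:
  assumes "quadratic_vf v" "sing v = {p1, p2, p3, p4}" "distinct [p1, p2, p3, p4]"
    and "det_D v p1 \<noteq> 0"
    and "quad_poly R" "\<And>z. z \<in> sing v \<Longrightarrow> R z = 0"
  obtains \<alpha> \<beta> where "\<And>z. R z = \<alpha> * vP v z + \<beta> * vQ v z"
proof -
  obtain \<alpha> \<beta> where mid: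
      "\<alpha> * fst (v (midpoint p1 p2)) + \<beta> * snd (v (midpoint p1 p2)) = R (midpoint p1 p2)"
      "\<alpha> * fst (v (midpoint p1 p3)) + \<beta> * snd (v (midpoint p1 p3)) = R (midpoint p1 p3)"
    by (rule cross_neq_0_imp_solvable[OF sing_midpoint_values_independent[OF assms(1-4)]])
  define F where "F = (\<lambda>z. R z - (\<alpha> * vP v z + \<beta> * vQ v z))"
  have quad: "quad_poly (vP v)" "quad_poly (vQ v)"
    using assms(1) quadratic_vf_iff by auto
  have F_sing: "F p = 0" if "p \<in> sing v" for p
    using that assms(6) by (simp add: F_def sing_iff)
  have "F z = 0" for z
  proof (rule quad_poly_vanishing_at_six_points)
    have F_lincomb: "F = (\<lambda>z. 1 * R z + (- 1) * (\<alpha> * vP v z + \<beta> * vQ v z))"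
      by (simp add: F_def fun_eq_iff)
    show "quad_poly F"
      unfolding F_lincomb by (rule quad_poly_lincomb[OF assms(5) quad_poly_lincomb[OF quad]])
    show "F p1 = 0" "F p2 = 0" "F p3 = 0" "F p4 = 0"
      using F_sing assms(2) by simp_all
    show "F (midpoint p1 p2) = 0" "F (midpoint p1 p3) = 0"
      using mid[symmetric] by (simp_all add: F_def vP_def vQ_def)
  qed (fact four_sing_in_general_position[OF assms(1-3)])+
  then show thesis
    by (intro that[of \<alpha> \<beta>]) (simp add: F_def)
qed

definition lin_transform :: "complex \<Rightarrow> complex \<Rightarrow> complex \<Rightarrow> complex \<Rightarrow> vf \<Rightarrow> vf" where
  "lin_transform m11 m12 m21 m22 v =
    (\<lambda>z. (m11 * vP v z + m12 * vQ v z, m21 * vP v z + m22 * vQ v z))"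

lemma vP_lin_transform [simp]: "vP (lin_transform m11 m12 m21 m22 v) = (\<lambda>z. m11 * vP v z + m12 * vQ v z)"
  and vQ_lin_transform [simp]: "vQ (lin_transform m11 m12 m21 m22 v) = (\<lambda>z. m21 * vP v z + m22 * vQ v z)"
  by (simp_all add: lin_transform_def vP_def vQ_def)

lemma lin_transform_id: "lin_transform 1 0 0 1 v = v"
  and lin_transform_neg: "lin_transform (- 1) 0 0 (- 1) v = (\<lambda>z. - v z)"
  by (simp_all add: lin_transform_def vP_def vQ_def fun_eq_iff prod_eq_iff)

lemma quadratic_vf_lin_transform:
  "quadratic_vf v \<Longrightarrow> quadratic_vf (lin_transform m11 m12 m21 m22 v)"
  by (simp add: quadratic_vf_iff quad_poly_lincomb)

lemma
  assumes "quadratic_vf v"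
  shows tr_D_lin_transform: "tr_D (lin_transform m11 m12 m21 m22 v) p =
      m11 * d_x (vP v) p + m12 * d_x (vQ v) p + m21 * d_y (vP v) p + m22 * d_y (vQ v) p"
    and det_D_lin_transform: "det_D (lin_transform m11 m12 m21 m22 v) p =
      (m11 * m22 - m12 * m21) * det_D v p"
  using assms unfolding quadratic_vf_iff
  by (simp_all add: tr_D_def det_D_def d_x_lincomb d_y_lincomb algebra_simps)

lemma quadratic_vf_vanishing_on_sing:
  assumes "quadratic_vf v" "sing v = {p1, p2, p3, p4}" "distinct [p1, p2, p3, p4]"
    and "det_D v p1 \<noteq> 0"
    and "quadratic_vf w" "sing v \<subseteq> sing w"
  obtains m11 m12 m21 m22 where "w = lin_transform m11 m12 m21 m22 v"
proof -
  have "quad_poly (vP w)" "quad_poly (vQ w)"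
    using assms(5) quadratic_vf_iff by auto
  moreover have "vP w z = 0" "vQ w z = 0" if "z \<in> sing v" for z
    using that assms(6) sing_iff by blast+
  ultimately obtain m11 m12 m21 m22
    where "\<And>z. vP w z = m11 * vP v z + m12 * vQ v z" "\<And>z. vQ w z = m21 * vP v z + m22 * vQ v z"
    using quad_poly_vanishing_on_sing_in_span[OF assms(1-4)] by metis
  then show thesis
    by (intro that[of m11 m12 m21 m22]) (simp add: lin_transform_def fun_eq_iff prod_eq_iff vP_def vQ_def)
qed

section \<open>Twins of Hamiltonian fields\<close>

lemma hamiltonian_tr_D: "hamiltonian v \<Longrightarrow> tr_D v p = 0"
  unfolding hamiltonian_def tr_D_def by blast

lemma hamiltonian_d_y_vQ: "hamiltonian v \<Longrightarrow> d_y (vQ v) p = - d_x (vP v) p"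
  using hamiltonian_tr_D[of v p] by (simp add: tr_D_def eq_neg_iff_add_eq_0 add.commute)

lemma hamiltonian_det_D:
  "hamiltonian v \<Longrightarrow> det_D v p = - ((d_x (vP v) p)\<^sup>2 + d_y (vP v) p * d_x (vQ v) p)"
  by (simp add: det_D_def hamiltonian_d_y_vQ power2_eq_square)

lemma hamiltonian_sing_Jacobian_sum_singular:
  assumes "quadratic_vf v" "hamiltonian v" "p \<in> sing v" "q \<in> sing v" "p \<noteq> q"
  shows "(d_x (vP v) p + d_x (vP v) q)\<^sup>2 + (d_y (vP v) p + d_y (vP v) q) * (d_x (vQ v) p + d_x (vQ v) q) = 0"
proof -
  have "(d_x (vP v) p + d_x (vP v) q)\<^sup>2 + (d_y (vP v) p + d_y (vP v) q) * (d_x (vQ v) p + d_x (vQ v) q) =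
    - ((d_x (vP v) p + d_x (vP v) q) * (d_y (vQ v) p + d_y (vQ v) q)
       - (d_y (vP v) p + d_y (vP v) q) * (d_x (vQ v) p + d_x (vQ v) q))"
    by (simp add: hamiltonian_d_y_vQ[OF assms(2)] power2_eq_square algebra_simps)
  then show ?thesis
    using sing_Jacobian_sum_singular[OF assms(1,3-5)] by simp
qed

lemma hamiltonian_neg_twin:
  assumes "quadratic_vf v" "hamiltonian v" "finite (sing v)"
  shows "quadratic_vf (\<lambda>z. - v z)" "twins v (\<lambda>z. - v z)"
proof -
  note neg = lin_transform_neg[symmetric, of v]
  show "quadratic_vf (\<lambda>z. - v z)"
    unfolding neg by (rule quadratic_vf_lin_transform[OF assms(1)])
  have sing_neg: "sing (\<lambda>z. - v z) = sing v"
    by (auto simp: sing_def prod_eq_iff)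
  have "v \<noteq> (\<lambda>z. - v z)"
  proof
    assume "v = (\<lambda>z. - v z)"
    then have "sing v = UNIV"
      by (auto simp: sing_def prod_eq_iff fun_eq_iff)
    with assms(3) show False
      by (simp add: finite_prod infinite_UNIV_char_0)
  qed
  moreover have "tr_D (\<lambda>z. - v z) p = tr_D v p" "det_D (\<lambda>z. - v z) p = det_D v p" for p
    using assms(1,2) unfolding neg
    by (simp_all add: tr_D_lin_transform det_D_lin_transform hamiltonian_tr_D hamiltonian_d_y_vQ)
  ultimately show "twins v (\<lambda>z. - v z)"
    using assms(3) sing_neg by (simp add: twins_def finite_sing_imp_isolated_sing)
qed

lemma hamiltonian_quadratic_twin_scalar:
  assumes v: "quadratic_vf v" "hamiltonian v"
    and sing: "sing v = {p1, p2, p3, p4}" "distinct [p1, p2, p3, p4]"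
    and nondeg: "det_D v p1 \<noteq> 0"
    and nonexc: "det_D v p1 + det_D v p2 \<noteq> 0" "det_D v p1 + det_D v p3 \<noteq> 0"
      "det_D v p2 + det_D v p3 \<noteq> 0"
    and w: "quadratic_vf w" "twins v w"
  obtains c where "w = lin_transform c 0 0 c v"
proof -
  have "sing v \<subseteq> sing w" and trace_w: "\<And>p. p \<in> sing v \<Longrightarrow> tr_D w p = 0"
    using w(2) hamiltonian_tr_D[OF v(2)] unfolding twins_def by auto
  then obtain m11 m12 m21 m22 where w_eq: "w = lin_transform m11 m12 m21 m22 v"
    using quadratic_vf_vanishing_on_sing[OF v(1) sing nondeg w(1)] by blast
  define A B C where "A p = d_x (vP v) p" and "B p = d_y (vP v) p" and "C p = d_x (vQ v) p" for p
  have trace: "m11 * A p + m12 * C p + m21 * B p - m22 * A p = 0" if "p \<in> sing v" for p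
    using trace_w[OF that] unfolding w_eq
    by (simp add: tr_D_lin_transform[OF v(1)] hamiltonian_d_y_vQ[OF v(2)] A_def B_def C_def)
  have det_sum: "det_D v p + det_D v q = - ((A p)\<^sup>2 + B p * C p + ((A q)\<^sup>2 + B q * C q))" for p q
    by (simp add: hamiltonian_det_D[OF v(2)] A_def B_def C_def)
  have "m12 = 0 \<and> m21 = 0 \<and> m22 = m11"
  proof (rule trace_annihilator_of_traceless_basis)
    show "A p1 * (B p2 * C p3 - B p3 * C p2) - B p1 * (A p2 * C p3 - A p3 * C p2)
        + C p1 * (A p2 * B p3 - A p3 * B p2) \<noteq> 0"
    proof (rule traceless_triple_independent)
      show "(A p1 + A p2)\<^sup>2 + (B p1 + B p2) * (C p1 + C p2) = 0"
        "(A p1 + A p3)\<^sup>2 + (B p1 + B p3) * (C p1 + C p3) = 0"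
        "(A p2 + A p3)\<^sup>2 + (B p2 + B p3) * (C p2 + C p3) = 0"
        using sing unfolding A_def B_def C_def
        by (simp_all add: hamiltonian_sing_Jacobian_sum_singular[OF v])
      show "((A p1)\<^sup>2 + B p1 * C p1 + ((A p2)\<^sup>2 + B p2 * C p2))
          * ((A p1)\<^sup>2 + B p1 * C p1 + ((A p3)\<^sup>2 + B p3 * C p3))
          * ((A p2)\<^sup>2 + B p2 * C p2 + ((A p3)\<^sup>2 + B p3 * C p3)) \<noteq> 0"
        using nonexc unfolding det_sum neg_equal_0_iff_equal by simp
    qed
    show "m11 * A p1 + m12 * C p1 + m21 * B p1 - m22 * A p1 = 0"
      "m11 * A p2 + m12 * C p2 + m21 * B p2 - m22 * A p2 = 0"
      "m11 * A p3 + m12 * C p3 + m21 * B p3 - m22 * A p3 = 0"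
      using sing(1) by (simp_all add: trace)
  qed
  then show thesis
    using w_eq by (intro that[of m11]) simp
qed

lemma hamiltonian_quadratic_twin_eq_neg:
  assumes v: "quadratic_vf v" "hamiltonian v"
    and sing: "sing v = {p1, p2, p3, p4}" "distinct [p1, p2, p3, p4]"
    and nondeg: "det_D v p1 \<noteq> 0"
    and nonexc: "det_D v p1 + det_D v p2 \<noteq> 0" "det_D v p1 + det_D v p3 \<noteq> 0"
      "det_D v p2 + det_D v p3 \<noteq> 0"
    and w: "quadratic_vf w" "twins v w"
  shows "w = (\<lambda>z. - v z)"
proof -
  obtain c where w_eq: "w = lin_transform c 0 0 c v"
    using hamiltonian_quadratic_twin_scalar[OF assms] .
  have "c * c * det_D v p1 = 1 * det_D v p1"
    using w(2) sing(1) unfolding twins_def w_eq by (simp add: det_D_lin_transform[OF v(1)])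
  then have "c * c = 1"
    using nondeg by (simp only: mult_cancel_right) simp
  moreover have "c \<noteq> 1"
    using w(2) unfolding twins_def w_eq by (auto simp: lin_transform_id)
  ultimately have "c = - 1"
    by (metis mult_cancel_left2 square_eq_1_iff)
  then show ?thesis
    unfolding w_eq by (simp add: lin_transform_neg)
qed

theorem theorem5p1:
  fixes v :: vf and p :: "nat \<Rightarrow> complex \<times> complex"
  assumes "quadratic_vf v" and "hamiltonian v"
    and "sing v = {p 1, p 2, p 3, p 4}"
    and "\<forall>j\<in>{1..4}. \<forall>k\<in>{1..4}. j \<noteq> k \<longrightarrow> p j \<noteq> p k"
    and "\<forall>j\<in>{1..4}. det_D v (p j) \<noteq> 0"
    and "\<forall>j\<in>{1..4}. \<forall>k\<in>{1..4}. j \<noteq> k \<longrightarrow> det_D v (p j) + det_D v (p k) \<noteq> 0"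
  shows "{w. quadratic_vf w \<and> twins v w} = {(\<lambda>z. - v z)}"
proof -
  have "distinct [p 1, p 2, p 3, p 4]"
    using assms(4) by auto
  moreover have "det_D v (p 1) \<noteq> 0"
    using assms(5) by auto
  moreover have "det_D v (p 1) + det_D v (p 2) \<noteq> 0" "det_D v (p 1) + det_D v (p 3) \<noteq> 0"
    "det_D v (p 2) + det_D v (p 3) \<noteq> 0"
    using assms(6) by auto
  moreover have "finite (sing v)"
    using assms(3) by simp
  ultimately show ?thesis
    using hamiltonian_neg_twin[OF assms(1,2)] hamiltonian_quadratic_twin_eq_neg[OF assms(1-3)]
    by blast
qed

end
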